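(* Let $S$ be the three-vertex tree with root $a$, whose right child is $b$, where $b$ has a left child $c$ (preorder $132$), and let $S'$ be the three-vertex tree with a root having both a left child and a right child (preorder $213$); all edges of $S$ and $S'$ are contiguous. Let $(P,e)$ be any tree pattern. Let $Q$ be obtained from $S$ by attaching $(P,e)$ as the left subtree of the root $a$ via a non-contiguous edge, and let $Q'$ be obtained from $S'$ by attaching $(P,e)$ as the left subtree of the right leaf of $S'$ via a non-contiguous edge. Then $Q$ and $Q'$ are Wilf-equivalent.
   Context: $\mathcal{T}_n$ is the set of binary trees on $n$ vertices labeled $1,\dots,n$ by the search tree property (labels of combined trees reassigned by this property). $c_L,c_R,p$: left child, right child, parent. A tree pattern is $(P,e)$, $P\in\mathcal{T}_k$, $e\colon[k]\setminus\{\text{root}\}\to\{0,1\}$; edge $(i,p(i))$ is contiguous if $e(i)=1$, non-contiguous if $e(i)=0$. $T\in\mathcal{T}_n$ contains $(P,e)$ if there is an injection $f\colon[k]\to[n]$ such that for every non-root $i$ of $P$: if $e(i)=1$, $f(i)$ is the left (resp. right) child of $f(p(i))$ when $i$ is the left (resp. right) child of $p(i)$; if $e(i)=0$, $f(i)$ lies in the left (resp. right) subtree of $f(p(i))$. $\mathcal{T}_n(Q)$ is the set of avoiders of $Q$. $Q,Q'$ are Wilf-equivalent if $|\mathcal{T}_n(Q)|=|\mathcal{T}_n(Q')|$ for all $n\ge0$. *)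

theory Defs
  imports Main
begin

text \<open>Unlabelled binary trees. The labels 1..n of a tree in T_n are determined by
the binary search tree property (in-order), so a tree in T_n is just a shape
with n nodes.\<close>
datatype bt = Tip | Nd bt bt

fun bsize :: "bt \<Rightarrow> nat" where
  "bsize Tip = 0"
| "bsize (Nd l r) = Suc (bsize l + bsize r)"

text \<open>Nodes are addressed by paths from the root (False = go left, True = go right).\<close>
fun bpos :: "bt \<Rightarrow> bool list set" where
  "bpos Tip = {}"
| "bpos (Nd l r) = insert [] (Cons False ` bpos l \<union> Cons True ` bpos r)"

text \<open>Tree patterns (P,e): a binary tree whose every node carries a boolean, the
value of e on the edge to its parent (True = contiguous, False = non-contiguous).
The boolean at the root is meaningless and ignored.\<close>
datatype pt = PTip | PNd pt bool pt

fun ppos :: "pt \<Rightarrow> bool list set" where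
  "ppos PTip = {}"
| "ppos (PNd l b r) = insert [] (Cons False ` ppos l \<union> Cons True ` ppos r)"

fun pedge :: "pt \<Rightarrow> bool list \<Rightarrow> bool" where
  "pedge PTip _ = False"
| "pedge (PNd l b r) [] = b"
| "pedge (PNd l b r) (False # p) = pedge l p"
| "pedge (PNd l b r) (True # p) = pedge r p"

definition contains :: "bt \<Rightarrow> pt \<Rightarrow> bool" where
  "contains T P \<longleftrightarrow> (\<exists>f. inj_on f (ppos P) \<and> f ` ppos P \<subseteq> bpos T \<and>
     (\<forall>q d. q @ [d] \<in> ppos P \<longrightarrow>
        (if pedge P (q @ [d]) then f (q @ [d]) = f q @ [d]
         else (\<exists>w. f (q @ [d]) = f q @ (d # w)))))"

definition avoiders :: "nat \<Rightarrow> pt \<Rightarrow> bt set" where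
  "avoiders n Q = {T. bsize T = n \<and> \<not> contains T Q}"

definition wilf_equiv :: "pt \<Rightarrow> pt \<Rightarrow> bool" where
  "wilf_equiv Q Q' \<longleftrightarrow> (\<forall>n. card (avoiders n Q) = card (avoiders n Q'))"

fun set_root_edge :: "bool \<Rightarrow> pt \<Rightarrow> pt" where
  "set_root_edge b PTip = PTip"
| "set_root_edge b (PNd l _ r) = PNd l b r"

definition Q_of :: "pt \<Rightarrow> pt" where
  "Q_of P = PNd (set_root_edge False P) True (PNd (PNd PTip True PTip) True PTip)"

definition Q'_of :: "pt \<Rightarrow> pt" where
  "Q'_of P = PNd (PNd PTip True PTip) True (PNd (set_root_edge False P) True PTip)"

end

theory Submission
  imports Defs
begin

text \<open>Cut a tree T along its right spine into the list L_1, ..., L_k of left subtrees of the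
spine nodes. Because (P,e) hangs from the rest of the pattern by a non-contiguous edge, T avoids Q
iff every L_i avoids Q and no L_i containing P is followed by a nonempty L_(i+1), while T
avoids Q' iff every L_i avoids Q' and the same condition holds for the reversed list. Both
patterns contain P, so the avoiders of P avoid both of them; hence if Q and Q' have equally many
avoiders of every size below n, there is a bijection between their avoiders of size less than n
preserving size and containment of P. Applying it to each L_i and reversing the list maps the
Q-avoiders of size n bijectively onto the Q'-avoiders of size n.\<close>

definition edge_step :: "bool \<Rightarrow> bool \<Rightarrow> bool list \<Rightarrow> bool list \<Rightarrow> bool" where
  "edge_step c d v v' \<longleftrightarrow> (if c then v' = v @ [d] else (\<exists>u. v' = v @ d # u))"

lemma edge_step_extends: "edge_step c d v v' \<Longrightarrow> \<exists>u. v' = v @ d # u"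
  by (auto simp: edge_step_def split: if_splits)

lemma edge_step_Cons: "edge_step c d (x # v) v' \<longleftrightarrow> (\<exists>v''. v' = x # v'' \<and> edge_step c d v v'')"
  by (auto simp: edge_step_def)

lemma ex_edge_step_False_iff: "(\<exists>v. edge_step False d w v \<and> R v) \<longleftrightarrow> (\<exists>u. R (w @ d # u))"
  by (auto simp: edge_step_def)

definition edge_compatible :: "pt \<Rightarrow> (bool list \<Rightarrow> bool list) \<Rightarrow> bool" where
  "edge_compatible X f \<longleftrightarrow>
     (\<forall>q d. q @ [d] \<in> ppos X \<longrightarrow> edge_step (pedge X (q @ [d])) d (f q) (f (q @ [d])))"

lemma contains_iff_edge_compatible:
  "contains T X \<longleftrightarrow> (\<exists>f. inj_on f (ppos X) \<and> f ` ppos X \<subseteq> bpos T \<and> edge_compatible X f)"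
  unfolding contains_def edge_compatible_def edge_step_def ..

lemma ppos_root: "[] \<in> ppos X \<longleftrightarrow> X \<noteq> PTip"
  by (cases X) auto

lemma all_snoc_ppos_PNd:
  "(\<forall>q d. q @ [d] \<in> ppos (PNd l b r) \<longrightarrow> R q d) \<longleftrightarrow>
     (l \<noteq> PTip \<longrightarrow> R [] False) \<and> (r \<noteq> PTip \<longrightarrow> R [] True) \<and>
     (\<forall>q d. q @ [d] \<in> ppos l \<longrightarrow> R (False # q) d) \<and>
     (\<forall>q d. q @ [d] \<in> ppos r \<longrightarrow> R (True # q) d)"
  (is "?lhs \<longleftrightarrow> ?rhs")
proof
  assume ?lhs
  then show ?rhs
    by (auto simp: ppos_root dest: spec[of _ "False # _"] spec[of _ "True # _"] spec[of _ "[]"])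
next
  assume ?rhs
  show ?lhs
  proof (intro allI impI)
    fix q d assume "q @ [d] \<in> ppos (PNd l b r)"
    with \<open>?rhs\<close> show "R q d"
      by (cases q) (auto simp: ppos_root)
  qed
qed

lemma edge_compatible_PNd:
  "edge_compatible (PNd l b r) f \<longleftrightarrow>
     edge_compatible l (f \<circ> Cons False) \<and> edge_compatible r (f \<circ> Cons True) \<and>
     (l \<noteq> PTip \<longrightarrow> edge_step (pedge l []) False (f []) (f [False])) \<and>
     (r \<noteq> PTip \<longrightarrow> edge_step (pedge r []) True (f []) (f [True]))"
  unfolding edge_compatible_def all_snoc_ppos_PNd by auto

lemma edge_compatible_Cons_extends:
  assumes "edge_compatible X f" "d # p \<in> ppos X"
  shows "\<exists>u. f (d # p) = f [] @ d # u"
  using assms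
proof (induction X arbitrary: d p f)
  case PTip
  then show ?case by simp
next
  case (PNd l b r)
  define Y where "Y = (if d then r else l)"
  have "p \<in> ppos Y" and Y: "edge_compatible Y (f \<circ> Cons d)"
    using PNd.prems by (auto simp: Y_def edge_compatible_PNd)
  then have "Y \<noteq> PTip" by auto
  then have "edge_step (pedge Y []) d (f []) (f [d])"
    using PNd.prems(1) by (cases d) (auto simp: Y_def edge_compatible_PNd)
  then obtain u where u: "f [d] = f [] @ d # u"
    using edge_step_extends by blast
  show ?case
  proof (cases p)
    case Nil
    with u show ?thesis by simp
  next
    case (Cons e p')
    have "\<exists>u'. (f \<circ> Cons d) (e # p') = (f \<circ> Cons d) [] @ e # u'"
      using \<open>p \<in> ppos Y\<close> Cons Y PNd.IH(1)[of "f \<circ> Cons False"] PNd.IH(2)[of "f \<circ> Cons True"]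
      by (cases d) (auto simp: Y_def comp_def)
    with u Cons show ?thesis by auto
  qed
qed

lemma edge_compatible_inj_on:
  assumes "edge_compatible X f"
  shows "inj_on f (ppos X)"
  using assms
proof (induction X arbitrary: f)
  case PTip
  then show ?case by simp
next
  case (PNd l b r)
  have inj_l: "inj_on (f \<circ> Cons False) (ppos l)" and inj_r: "inj_on (f \<circ> Cons True) (ppos r)"
    using PNd by (auto simp: edge_compatible_PNd)
  have extends: "\<exists>u. f (d # p) = f [] @ d # u" if "d # p \<in> ppos (PNd l b r)" for d p
    using edge_compatible_Cons_extends[OF PNd.prems that] .
  show ?case
  proof (rule inj_onI)
    fix x y assume x: "x \<in> ppos (PNd l b r)" and y: "y \<in> ppos (PNd l b r)" and "f x = f y"
    show "x = y"
    proof (cases x; cases y)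
      fix d p e q assume "x = d # p" "y = e # q"
      with x y extends[of d p] extends[of e q] \<open>f x = f y\<close> have "d = e" by auto
      show "x = y"
      proof (cases d)
        case True
        with x y \<open>x = d # p\<close> \<open>y = e # q\<close> \<open>d = e\<close> \<open>f x = f y\<close> show ?thesis
          using inj_onD[OF inj_r, of p q] by auto
      next
        case False
        with x y \<open>x = d # p\<close> \<open>y = e # q\<close> \<open>d = e\<close> \<open>f x = f y\<close> show ?thesis
          using inj_onD[OF inj_l, of p q] by auto
      qed
    next
      fix e q assume "x = []" "y = e # q"
      then show "x = y" using extends[of e q] y \<open>f x = f y\<close> by auto
    next
      fix d p assume "x = d # p" "y = []"
      then show "x = y" using extends[of d p] x \<open>f x = f y\<close> by auto
    qed simp
  qed
qed

fun occurs_at :: "bt \<Rightarrow> bool list \<Rightarrow> pt \<Rightarrow> bool" where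
  "occurs_at T w PTip \<longleftrightarrow> True"
| "occurs_at T w (PNd l b r) \<longleftrightarrow> w \<in> bpos T \<and>
     (\<exists>v. edge_step (pedge l []) False w v \<and> occurs_at T v l) \<and>
     (\<exists>v. edge_step (pedge r []) True w v \<and> occurs_at T v r)"

lemma occurs_at_iff_edge_compatible:
  "occurs_at T w X \<longleftrightarrow> (\<exists>f. f [] = w \<and> f ` ppos X \<subseteq> bpos T \<and> edge_compatible X f)"
proof (induction X arbitrary: w)
  case PTip
  show ?case by (auto simp: edge_compatible_def)
next
  case (PNd l b r)
  show ?case
  proof
    assume "occurs_at T w (PNd l b r)"
    then obtain vl vr where w: "w \<in> bpos T"
      and vl: "edge_step (pedge l []) False w vl" "occurs_at T vl l"
      and vr: "edge_step (pedge r []) True w vr" "occurs_at T vr r"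
      by auto
    obtain fl where fl: "fl [] = vl" "fl ` ppos l \<subseteq> bpos T" "edge_compatible l fl"
      using PNd.IH(1) vl(2) by blast
    obtain fr where fr: "fr [] = vr" "fr ` ppos r \<subseteq> bpos T" "edge_compatible r fr"
      using PNd.IH(2) vr(2) by blast
    define f where "f p = (case p of [] \<Rightarrow> w | d # p' \<Rightarrow> if d then fr p' else fl p')" for p
    have "f \<circ> Cons False = fl" "f \<circ> Cons True = fr"
      by (auto simp: f_def)
    then have "edge_compatible (PNd l b r) f"
      using vl(1) vr(1) fl fr by (simp add: edge_compatible_PNd f_def)
    moreover have "f ` ppos (PNd l b r) \<subseteq> bpos T"
      using w fl(2) fr(2) by (auto simp: f_def)
    moreover have "f [] = w"
      by (simp add: f_def)
    ultimately show "\<exists>f. f [] = w \<and> f ` ppos (PNd l b r) \<subseteq> bpos T \<and> edge_compatible (PNd l b r) f"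
      by blast
  next
    assume "\<exists>f. f [] = w \<and> f ` ppos (PNd l b r) \<subseteq> bpos T \<and> edge_compatible (PNd l b r) f"
    then obtain f where f: "f [] = w" "f ` ppos (PNd l b r) \<subseteq> bpos T" "edge_compatible (PNd l b r) f"
      by blast
    have subtrees: "occurs_at T (f [False]) l" "occurs_at T (f [True]) r"
      using f(2,3) unfolding PNd.IH edge_compatible_PNd
      by (auto intro!: exI[of _ "f \<circ> Cons _"])
    have child: "\<exists>v. edge_step (pedge X []) d w v \<and> occurs_at T v X"
      if "X = (if d then r else l)" for d X
    proof (cases "X = PTip")
      case False
      then show ?thesis
        using that f(1,3) subtrees
        by (cases d) (auto simp: edge_compatible_PNd)
    qed (auto simp: edge_step_def)
    have "w \<in> bpos T"
      using f(1,2) by auto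
    then show "occurs_at T w (PNd l b r)"
      using child[where d = False] child[where d = True] by simp
  qed
qed

lemma contains_iff_occurs_at: "contains T X \<longleftrightarrow> (\<exists>w. occurs_at T w X)"
  by (auto simp: contains_iff_edge_compatible occurs_at_iff_edge_compatible
      intro: edge_compatible_inj_on)

lemma occurs_at_Cons: "occurs_at (Nd L R) (d # w) X \<longleftrightarrow> occurs_at (if d then R else L) w X"
  by (induction X arbitrary: w) (auto simp: edge_step_Cons)

lemma contains_Nd:
  "contains (Nd L R) X \<longleftrightarrow> occurs_at (Nd L R) [] X \<or> contains L X \<or> contains R X"
  unfolding contains_iff_occurs_at
  by (metis (full_types) neq_Nil_conv occurs_at_Cons)

lemma occurs_at_set_root_edge: "occurs_at T w (set_root_edge b X) \<longleftrightarrow> occurs_at T w X"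
  by (cases X) auto

lemma pedge_set_root_edge_False: "pedge (set_root_edge False X) [] = False"
  by (cases X) auto

lemma occurs_at_root_Q_of:
  "occurs_at (Nd L R) [] (Q_of P) \<longleftrightarrow> contains L P \<and> (\<exists>A B C. R = Nd (Nd A B) C)"
  by (cases R; cases "case R of Nd A _ \<Rightarrow> A")
    (auto simp: Q_of_def pedge_set_root_edge_False ex_edge_step_False_iff occurs_at_set_root_edge
      occurs_at_Cons contains_iff_occurs_at edge_step_def)

lemma occurs_at_root_Q'_of:
  "occurs_at (Nd L R) [] (Q'_of P) \<longleftrightarrow> L \<noteq> Tip \<and> (\<exists>A C. R = Nd A C \<and> contains A P)"
  by (cases L; cases R)
    (auto simp: Q'_of_def pedge_set_root_edge_False ex_edge_step_False_iff occurs_at_set_root_edge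
      occurs_at_Cons contains_iff_occurs_at edge_step_def)

lemma contains_Q_of_imp_contains: "contains T (Q_of P) \<Longrightarrow> contains T P"
  by (auto simp: contains_iff_occurs_at Q_of_def pedge_set_root_edge_False ex_edge_step_False_iff
      occurs_at_set_root_edge)

lemma contains_Q'_of_imp_contains: "contains T (Q'_of P) \<Longrightarrow> contains T P"
  by (auto simp: contains_iff_occurs_at Q'_of_def pedge_set_root_edge_False ex_edge_step_False_iff
      occurs_at_set_root_edge edge_step_def)

fun spine :: "bt \<Rightarrow> bt list" where
  "spine Tip = []"
| "spine (Nd L R) = L # spine R"

fun from_spine :: "bt list \<Rightarrow> bt" where
  "from_spine [] = Tip"
| "from_spine (L # Ls) = Nd L (from_spine Ls)"

lemma from_spine_spine [simp]: "from_spine (spine T) = T"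
  by (induction T) auto

lemma spine_from_spine [simp]: "spine (from_spine Ls) = Ls"
  by (induction Ls) auto

lemma inj_from_spine: "inj from_spine"
  by (metis injI spine_from_spine)

lemma bsize_from_spine: "bsize (from_spine Ls) = (\<Sum>L\<leftarrow>Ls. Suc (bsize L))"
  by (induction Ls) auto

lemma bsize_less_of_mem_spine: "L \<in> set (spine T) \<Longrightarrow> bsize L < bsize T"
  by (induction T) auto

definition admissible_spine :: "pt \<Rightarrow> bt list \<Rightarrow> bool" where
  "admissible_spine P Ls \<longleftrightarrow> successively (\<lambda>L L'. contains L P \<longrightarrow> L' = Tip) Ls"

lemma not_contains_Q_of_from_spine:
  "\<not> contains (from_spine Ls) (Q_of P) \<longleftrightarrow>
     (\<forall>L\<in>set Ls. \<not> contains L (Q_of P)) \<and> admissible_spine P Ls"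
proof (induction Ls)
  case Nil
  then show ?case by (simp add: contains_iff_occurs_at Q_of_def admissible_spine_def)
next
  case (Cons L Ls)
  have "(\<exists>A B C. from_spine Ls = Nd (Nd A B) C) \<longleftrightarrow> Ls \<noteq> [] \<and> hd Ls \<noteq> Tip"
    by (cases Ls; cases "hd Ls") auto
  with Cons show ?case
    by (auto simp: contains_Nd occurs_at_root_Q_of admissible_spine_def successively_Cons)
qed

lemma not_contains_Q'_of_from_spine:
  "\<not> contains (from_spine Ls) (Q'_of P) \<longleftrightarrow>
     (\<forall>L\<in>set Ls. \<not> contains L (Q'_of P)) \<and> admissible_spine P (rev Ls)"
  unfolding admissible_spine_def successively_rev
proof (induction Ls)
  case Nil
  then show ?case by (simp add: contains_iff_occurs_at Q'_of_def)
next
  case (Cons L Ls)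
  then show ?case
    by (cases Ls) (auto simp: contains_Nd occurs_at_root_Q'_of)
qed

lemma ex_bij_betw_preserving:
  assumes "finite A" "finite B" "\<And>v. card {x \<in> A. h x = v} = card {y \<in> B. h y = v}"
  shows "\<exists>\<psi>. bij_betw \<psi> A B \<and> (\<forall>x\<in>A. h (\<psi> x) = h x)"
proof -
  have "\<exists>g. bij_betw g {x \<in> A. h x = v} {y \<in> B. h y = v}" for v
    using assms by (intro finite_same_card_bij) auto
  then obtain g where g: "\<And>v. bij_betw (g v) {x \<in> A. h x = v} {y \<in> B. h y = v}"
    by metis
  define \<psi> where "\<psi> x = g (h x) x" for x
  have \<psi>: "\<psi> x \<in> B \<and> h (\<psi> x) = h x" if "x \<in> A" for x
    using bij_betw_apply[OF g[of "h x"]] that by (simp add: \<psi>_def)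
  have "inj_on \<psi> A"
  proof (rule inj_onI)
    fix x y assume "x \<in> A" "y \<in> A" "\<psi> x = \<psi> y"
    then have "h x = h y"
      using \<psi> by metis
    with \<open>x \<in> A\<close> \<open>y \<in> A\<close> \<open>\<psi> x = \<psi> y\<close> show "x = y"
      using bij_betw_imp_inj_on[OF g[of "h x"]] by (auto simp: \<psi>_def dest: inj_onD)
  qed
  moreover have "B \<subseteq> \<psi> ` A"
  proof
    fix y assume "y \<in> B"
    then obtain x where "x \<in> A" "h x = h y" "y = g (h y) x"
      using bij_betw_imp_surj_on[OF g[of "h y"]] by force
    then have "y = \<psi> x"
      by (simp add: \<psi>_def)
    with \<open>x \<in> A\<close> show "y \<in> \<psi> ` A"
      by blast
  qed
  ultimately show ?thesis
    using \<psi> by (auto simp: bij_betw_def)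
qed

lemma bsize_eq_0_iff: "bsize T = 0 \<longleftrightarrow> T = Tip"
  by (cases T) auto

lemma finite_bsize_le: "finite {T. bsize T \<le> n}"
proof (induction n)
  case 0
  have "{T. bsize T \<le> 0} = {Tip}"
    by (auto simp: bsize_eq_0_iff)
  then show ?case by simp
next
  case (Suc n)
  let ?S = "{T. bsize T \<le> n}"
  have "{T. bsize T \<le> Suc n} \<subseteq> insert Tip (case_prod Nd ` (?S \<times> ?S))"
  proof
    fix T assume "T \<in> {T. bsize T \<le> Suc n}"
    then show "T \<in> insert Tip (case_prod Nd ` (?S \<times> ?S))"
      by (cases T) auto
  qed
  then show ?case
    using Suc by (auto intro: finite_subset)
qed

lemma finite_avoiders: "finite (avoiders n X)"
  unfolding avoiders_def by (rule finite_subset[OF _ finite_bsize_le[of n]]) auto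

lemma bsize_from_spine_rev: "bsize (from_spine (rev Ls)) = bsize (from_spine Ls)"
  by (simp add: bsize_from_spine rev_map[symmetric])

definition admissible_spines :: "pt \<Rightarrow> bt set \<Rightarrow> nat \<Rightarrow> bt list set" where
  "admissible_spines P X n = {Ls \<in> lists X. bsize (from_spine Ls) = n \<and> admissible_spine P Ls}"

lemma avoiders_Q_of_eq_image:
  "avoiders n (Q_of P) =
     from_spine ` admissible_spines P {L. bsize L < n \<and> \<not> contains L (Q_of P)} n"
proof (intro equalityI subsetI)
  fix T assume "T \<in> avoiders n (Q_of P)"
  then have "spine T \<in> admissible_spines P {L. bsize L < n \<and> \<not> contains L (Q_of P)} n"
    using not_contains_Q_of_from_spine[of "spine T"] bsize_less_of_mem_spine[of _ T]
    by (auto simp: avoiders_def admissible_spines_def)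
  then show "T \<in> from_spine ` admissible_spines P {L. bsize L < n \<and> \<not> contains L (Q_of P)} n"
    by (rule image_eqI[rotated]) simp
next
  fix T assume "T \<in> from_spine ` admissible_spines P {L. bsize L < n \<and> \<not> contains L (Q_of P)} n"
  then obtain Ls where "Ls \<in> admissible_spines P {L. bsize L < n \<and> \<not> contains L (Q_of P)} n"
    and "T = from_spine Ls"
    by blast
  then show "T \<in> avoiders n (Q_of P)"
    using not_contains_Q_of_from_spine[of Ls P] by (auto simp: avoiders_def admissible_spines_def)
qed

lemma avoiders_Q'_of_eq_image:
  "avoiders n (Q'_of P) =
     (from_spine \<circ> rev) ` admissible_spines P {L. bsize L < n \<and> \<not> contains L (Q'_of P)} n"
proof (intro equalityI subsetI)
  fix T assume "T \<in> avoiders n (Q'_of P)"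
  then have "rev (spine T) \<in> admissible_spines P {L. bsize L < n \<and> \<not> contains L (Q'_of P)} n"
    using not_contains_Q'_of_from_spine[of "spine T"] bsize_less_of_mem_spine[of _ T]
    by (auto simp: avoiders_def admissible_spines_def bsize_from_spine_rev)
  then show "T \<in> (from_spine \<circ> rev) ` admissible_spines P {L. bsize L < n \<and> \<not> contains L (Q'_of P)} n"
    by (rule image_eqI[rotated]) simp
next
  fix T assume "T \<in> (from_spine \<circ> rev) ` admissible_spines P {L. bsize L < n \<and> \<not> contains L (Q'_of P)} n"
  then obtain Ls where "Ls \<in> admissible_spines P {L. bsize L < n \<and> \<not> contains L (Q'_of P)} n"
    and "T = from_spine (rev Ls)"
    by auto
  then show "T \<in> avoiders n (Q'_of P)"
    using not_contains_Q'_of_from_spine[of "rev Ls" P]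
    by (auto simp: avoiders_def admissible_spines_def bsize_from_spine_rev)
qed

lemma bij_betw_map_admissible_spines:
  assumes "bij_betw \<psi> X Y"
    and preserves:
      "\<And>L. L \<in> X \<Longrightarrow> bsize (\<psi> L) = bsize L \<and> (contains (\<psi> L) P \<longleftrightarrow> contains L P)"
  shows "bij_betw (map \<psi>) (admissible_spines P X n) (admissible_spines P Y n)"
  unfolding admissible_spines_def
proof (rule bij_betw_Collect[OF bij_lists[OF assms(1)]])
  fix Ls assume "Ls \<in> lists X"
  then have "\<forall>L\<in>set Ls. bsize (\<psi> L) = bsize L \<and> (\<psi> L = Tip \<longleftrightarrow> L = Tip) \<and>
      (contains (\<psi> L) P \<longleftrightarrow> contains L P)"
    using preserves by (auto simp flip: bsize_eq_0_iff)
  then show "bsize (from_spine (map \<psi> Ls)) = n \<and> admissible_spine P (map \<psi> Ls) \<longleftrightarrow>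
      bsize (from_spine Ls) = n \<and> admissible_spine P Ls"
    by (simp add: bsize_from_spine admissible_spine_def successively_map cong: map_cong)
qed

lemma card_avoiders_fibre:
  assumes "\<And>T. contains T Z \<Longrightarrow> contains T P"
  shows "card {L \<in> {L. bsize L < n \<and> \<not> contains L Z}. (bsize L, contains L P) = (m, c)} =
    (if m < n then if c then card (avoiders m Z) - card (avoiders m P) else card (avoiders m P) else 0)"
proof -
  have "{L \<in> {L. bsize L < n \<and> \<not> contains L Z}. (bsize L, contains L P) = (m, c)} =
      (if m < n then if c then avoiders m Z - avoiders m P else avoiders m P else {})"
    using assms by (auto simp: avoiders_def)
  moreover have "avoiders m P \<subseteq> avoiders m Z"
    using assms by (auto simp: avoiders_def)
  ultimately show ?thesis
    by (simp add: card_Diff_subset finite_avoiders)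
qed

lemma card_avoiders_Q_of_eq_Q'_of: "card (avoiders n (Q_of P)) = card (avoiders n (Q'_of P))"
proof (induction n rule: less_induct)
  case (less n)
  define X where "X = {L. bsize L < n \<and> \<not> contains L (Q_of P)}"
  define Y where "Y = {L. bsize L < n \<and> \<not> contains L (Q'_of P)}"
  have "finite X" "finite Y"
    unfolding X_def Y_def by (auto intro: finite_subset[OF _ finite_bsize_le[of n]])
  moreover have "card {L \<in> X. (bsize L, contains L P) = (m, c)} =
      card {L \<in> Y. (bsize L, contains L P) = (m, c)}" for m c
    using card_avoiders_fibre[OF contains_Q_of_imp_contains, where n = n and m = m and c = c]
      card_avoiders_fibre[OF contains_Q'_of_imp_contains, where n = n and m = m and c = c] less
    unfolding X_def Y_def by simp
  then have "card {L \<in> X. (bsize L, contains L P) = v} =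
      card {L \<in> Y. (bsize L, contains L P) = v}" for v
    by (cases v) blast
  ultimately obtain \<psi> where "bij_betw \<psi> X Y"
    and "\<forall>L\<in>X. (bsize (\<psi> L), contains (\<psi> L) P) = (bsize L, contains L P)"
    using ex_bij_betw_preserving[of X Y "\<lambda>L. (bsize L, contains L P)"] by blast
  then have spines_bij: "bij_betw (map \<psi>) (admissible_spines P X n) (admissible_spines P Y n)"
    by (intro bij_betw_map_admissible_spines) auto
  have "card (avoiders n (Q_of P)) = card (admissible_spines P X n)"
    unfolding avoiders_Q_of_eq_image X_def[symmetric]
    by (intro card_image inj_on_subset[OF inj_from_spine]) simp
  also have "\<dots> = card (admissible_spines P Y n)"
    using spines_bij by (rule bij_betw_same_card)
  also have "\<dots> = card (avoiders n (Q'_of P))"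
    unfolding avoiders_Q'_of_eq_image Y_def[symmetric]
    by (intro card_image[symmetric] inj_on_subset[OF inj_compose[OF inj_from_spine inj_on_rev]]) simp
  finally show ?case .
qed

theorem lemma19:
  fixes P :: pt
  assumes "P \<noteq> PTip"
  shows "wilf_equiv (Q_of P) (Q'_of P)"
  by (simp add: wilf_equiv_def card_avoiders_Q_of_eq_Q'_of)

end
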